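(* Let $Q\subseteq\{0,1\}^n$ be any finite set of query points (the queries of a non-adaptive deterministic algorithm). Then the distribution of the answer vector $(\mathbf f(x))_{x\in Q}$ when $\mathbf f\sim\mathcal D_{\mathrm{yes}}$ conditioned on the event $\overline{\mathsf{Bad}}$ is identical to its distribution when $\mathbf f\sim\mathcal D_{\mathrm{no}}$ conditioned on $\overline{\mathsf{Bad}}$.
   Context: Parameters: $c_1>0$ constant, $a=\sqrt n/\epsilon$, $m=n-a$, $L=0.1\cdot 2^{\sqrt m/\epsilon}$. For $B\subseteq[n]$, $x_B$ is the restriction of $x$ to $B$; $|z|$ is Hamming weight. On $\{0,1\}^A$: $h^{(+,0)}\equiv0$; $h^{(+,1)}(z)=1$ iff $|z|>a/2+c_1\sqrt a$ or $|z|<a/2-c_1\sqrt a$; $h^{(-,0)}(z)=1$ iff $|z|>a/2+c_1\sqrt a$; $h^{(-,1)}(z)=1$ iff $|z|<a/2-c_1\sqrt a$. Both $\mathcal D_{\mathrm{yes}}$ and $\mathcal D_{\mathrm{no}}$ draw: a uniform $\mathbf A\subseteq[n]$ of size $a$, $\mathbf C=[n]\setminus\mathbf A$; $\mathbf T=(\mathbf T_1,\dots,\mathbf T_L)$, each $\mathbf T_\ell\subseteq\mathbf C$ formed independently by $\sqrt m/\epsilon$ uniform draws from $\mathbf C$ with replacement; uniform $\mathbf b\in\{0,1\}^L$. Let $S_{\mathbf T}(y)=\{\ell:y_j=1\ \forall j\in\mathbf T_\ell\}$. The function is: $1$ if $|S_{\mathbf T}(x_{\mathbf C})|>1$ or $|x_{\mathbf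 C}|>m/2+0.05\epsilon\sqrt m$; otherwise $0$ if $|S_{\mathbf T}(x_{\mathbf C})|=0$ or $|x_{\mathbf C}|<m/2$; otherwise, with $S_{\mathbf T}(x_{\mathbf C})=\{\ell\}$, it equals $h^{(+,\mathbf b_\ell)}(x_{\mathbf A})$ for $\mathcal D_{\mathrm{yes}}$ and $h^{(-,\mathbf b_\ell)}(x_{\mathbf A})$ for $\mathcal D_{\mathrm{no}}$. The event $\mathsf{Bad}$ (depending on $\mathbf A,\mathbf T$ and $Q$) holds iff there exist $x,y\in Q$ and $\ell\in[L]$ with $S_{\mathbf T}(x_{\mathbf C})=S_{\mathbf T}(y_{\mathbf C})=\{\ell\}$, $|x_{\mathbf C}|,|y_{\mathbf C}|\in[m/2,m/2+0.05\epsilon\sqrt m]$, $|x_{\mathbf A}|<a/2-c_1\sqrt a$ and $|y_{\mathbf A}|>a/2+c_1\sqrt a$. *)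

theory Defs
  imports "HOL-Probability.Probability"
begin

text \<open>Points of the hypercube are bit lists; coordinates are indexed 0..n-1.
  The weight of x restricted to B is the number of 1-coordinates of x in B.\<close>

definition wt :: "nat set \<Rightarrow> bool list \<Rightarrow> nat" where
  "wt B x = card {i \<in> B. i < length x \<and> x ! i}"

definition S_T :: "nat \<Rightarrow> (nat \<Rightarrow> nat set) \<Rightarrow> bool list \<Rightarrow> nat set" where
  "S_T L T x = {l \<in> {..<L}. \<forall>j \<in> T l. j < length x \<and> x ! j}"

text \<open>The functions h^{(+,beta)} (yes = True) and h^{(-,beta)} (yes = False),
  applied to x_A, where a = |A|.\<close>
definition h_fun :: "bool \<Rightarrow> bool \<Rightarrow> real \<Rightarrow> nat \<Rightarrow> nat set \<Rightarrow> bool list \<Rightarrow> bool" where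
  "h_fun yes beta c1 a A x =
     (let w = real (wt A x);
          hi = w > real a / 2 + c1 * sqrt (real a);
          lo = w < real a / 2 - c1 * sqrt (real a)
      in if yes then (if beta then hi \<or> lo else False)
         else (if beta then lo else hi))"

text \<open>The function determined by (A, T, b); yes = True gives D_yes, yes = False gives D_no.\<close>
definition hard_f :: "bool \<Rightarrow> nat \<Rightarrow> nat \<Rightarrow> real \<Rightarrow> real \<Rightarrow> nat \<Rightarrow>
    nat set \<Rightarrow> (nat \<Rightarrow> nat set) \<Rightarrow> (nat \<Rightarrow> bool) \<Rightarrow> bool list \<Rightarrow> bool" where
  "hard_f yes n a \<epsilon> c1 L A T b x =
     (let C = {..<n} - A; m = real (n - a); S = S_T L T x; wC = real (wt C x)
      in if card S > 1 \<or> wC > m / 2 + 0.05 * \<epsilon> * sqrt m then True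
         else if card S = 0 \<or> wC < m / 2 then False
         else h_fun yes (b (the_elem S)) c1 a A x)"

definition Bad :: "nat \<Rightarrow> nat \<Rightarrow> real \<Rightarrow> real \<Rightarrow> nat \<Rightarrow>
    nat set \<Rightarrow> (nat \<Rightarrow> nat set) \<Rightarrow> bool list set \<Rightarrow> bool" where
  "Bad n a \<epsilon> c1 L A T Q =
     (let C = {..<n} - A; m = real (n - a) in
      \<exists>x\<in>Q. \<exists>y\<in>Q. \<exists>l\<in>{..<L}.
         S_T L T x = {l} \<and> S_T L T y = {l} \<and>
         m / 2 \<le> real (wt C x) \<and> real (wt C x) \<le> m / 2 + 0.05 * \<epsilon> * sqrt m \<and>
         m / 2 \<le> real (wt C y) \<and> real (wt C y) \<le> m / 2 + 0.05 * \<epsilon> * sqrt m \<and>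
         real (wt A x) < real a / 2 - c1 * sqrt (real a) \<and>
         real (wt A y) > real a / 2 + c1 * sqrt (real a))"

definition draws :: "nat set \<Rightarrow> nat \<Rightarrow> nat set pmf" where
  "draws C t = map_pmf (\<lambda>g. g ` {..<t}) (Pi_pmf {..<t} 0 (\<lambda>_. pmf_of_set C))"

text \<open>Joint distribution of (A, T, b), common to D_yes and D_no.\<close>
definition ATb_pmf :: "nat \<Rightarrow> nat \<Rightarrow> nat \<Rightarrow> nat \<Rightarrow>
    (nat set \<times> (nat \<Rightarrow> nat set) \<times> (nat \<Rightarrow> bool)) pmf" where
  "ATb_pmf n a t L = do {
     A \<leftarrow> pmf_of_set {A. A \<subseteq> {..<n} \<and> card A = a};
     T \<leftarrow> Pi_pmf {..<L} {} (\<lambda>_. draws ({..<n} - A) t);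
     b \<leftarrow> Pi_pmf {..<L} False (\<lambda>_. bernoulli_pmf (1 / 2));
     return_pmf (A, T, b) }"

definition notBad_event :: "nat \<Rightarrow> nat \<Rightarrow> real \<Rightarrow> real \<Rightarrow> nat \<Rightarrow> bool list set \<Rightarrow>
    (nat set \<times> (nat \<Rightarrow> nat set) \<times> (nat \<Rightarrow> bool)) set" where
  "notBad_event n a \<epsilon> c1 L Q = {(A, T, b). \<not> Bad n a \<epsilon> c1 L A T Q}"

definition answer_dist :: "bool \<Rightarrow> nat \<Rightarrow> nat \<Rightarrow> real \<Rightarrow> real \<Rightarrow> nat \<Rightarrow> nat \<Rightarrow>
    bool list set \<Rightarrow> (bool list \<Rightarrow> bool) pmf" where
  "answer_dist yes n a \<epsilon> c1 t L Q =
     map_pmf (\<lambda>(A, T, b). \<lambda>x. if x \<in> Q then hard_f yes n a \<epsilon> c1 L A T b x else False)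
       (cond_pmf (ATb_pmf n a t L) (notBad_event n a \<epsilon> c1 L Q))"

end

theory Submission
  imports Defs
begin

text \<open>On a query point whose restriction to C lies in a single block l and has middle weight,
  h^{(+,b)} and h^{(-,b)} agree on low points and are complementary on high points of x_A.
  Flipping the fair coins b_l of exactly those blocks l that contain a high query point is a
  measure-preserving involution of (A, T, b) that fixes the complement of Bad; outside Bad no
  such block also contains a low query point, so the flip turns every yes-answer on Q into the
  corresponding no-answer.\<close>

definition flip_on :: "'i set \<Rightarrow> ('i \<Rightarrow> bool) \<Rightarrow> 'i \<Rightarrow> bool" where
  "flip_on H b = (\<lambda>i. b i \<noteq> (i \<in> H))"

lemma flip_on_flip_on [simp]: "flip_on H (flip_on H b) = b"
  by (auto simp: flip_on_def)

lemma inj_flip_on: "inj (flip_on H)"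
  by (metis flip_on_flip_on injI)

lemma map_pmf_flip_on_fair_coins:
  assumes "finite I" and "H \<subseteq> I"
  shows "map_pmf (flip_on H) (Pi_pmf I False (\<lambda>_. bernoulli_pmf (1/2)))
       = Pi_pmf I False (\<lambda>_. bernoulli_pmf (1/2))"
    (is "map_pmf _ ?P = ?P")
proof (rule pmf_eqI)
  fix g
  have "pmf (map_pmf (flip_on H) ?P) g = pmf (map_pmf (flip_on H) ?P) (flip_on H (flip_on H g))"
    by simp
  also have "\<dots> = pmf ?P (flip_on H g)"
    by (rule pmf_map_inj'[OF inj_flip_on])
  also have "\<dots> = pmf ?P g"
    using assms by (subst (1 2) pmf_Pi) (auto simp: flip_on_def)
  finally show "pmf (map_pmf (flip_on H) ?P) g = pmf ?P g" .
qed

lemma map_cond_pmf_eq_by_symmetry: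
  assumes "map_pmf \<psi> D = D" and "\<psi> -` E = E" and "set_pmf D \<inter> E \<noteq> {}"
    and "\<And>w. w \<in> E \<Longrightarrow> G (\<psi> w) = F w"
  shows "map_pmf F (cond_pmf D E) = map_pmf G (cond_pmf D E)"
proof -
  have "map_pmf G (cond_pmf D E) = map_pmf G (cond_pmf (map_pmf \<psi> D) E)"
    by (simp only: assms(1))
  also have "\<dots> = map_pmf (G \<circ> \<psi>) (cond_pmf D E)"
    using assms(2,3) by (simp add: cond_map_pmf pmf.map_comp)
  also have "\<dots> = map_pmf F (cond_pmf D E)"
    using assms(3,4) by (intro map_pmf_cong) (auto simp: set_cond_pmf)
  finally show ?thesis by (rule sym)
qed

lemma map_pmf_flip_on_ATb_pmf:
  assumes "\<And>A T. H A T \<subseteq> {..<L}"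
  shows "map_pmf (\<lambda>(A, T, b). (A, T, flip_on (H A T) b)) (ATb_pmf n a t L) = ATb_pmf n a t L"
proof -
  have "map_pmf (\<lambda>b. (A, T, flip_on (H A T) b)) (Pi_pmf {..<L} False (\<lambda>_. bernoulli_pmf (1/2)))
      = map_pmf (\<lambda>b. (A, T, b)) (Pi_pmf {..<L} False (\<lambda>_. bernoulli_pmf (1/2)))" for A T
  proof -
    have "map_pmf (\<lambda>b. (A, T, flip_on (H A T) b)) (Pi_pmf {..<L} False (\<lambda>_. bernoulli_pmf (1/2)))
        = map_pmf (\<lambda>b. (A, T, b))
            (map_pmf (flip_on (H A T)) (Pi_pmf {..<L} False (\<lambda>_. bernoulli_pmf (1/2))))"
      by (simp add: pmf.map_comp comp_def)
    then show ?thesis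
      by (simp only: map_pmf_flip_on_fair_coins[OF finite_lessThan assms])
  qed
  then show ?thesis
    unfolding ATb_pmf_def map_bind_pmf map_return_pmf by (simp add: map_pmf_def[symmetric])
qed

lemma h_fun_plus_eq_minus:
  assumes "c1 \<ge> 0"
    and "real (wt A x) > real a / 2 + c1 * sqrt (real a) \<Longrightarrow> \<beta>' = (\<not> \<beta>)"
    and "real (wt A x) < real a / 2 - c1 * sqrt (real a) \<Longrightarrow> \<beta>' = \<beta>"
  shows "h_fun True \<beta> c1 a A x = h_fun False \<beta>' c1 a A x"
proof -
  have "c1 * sqrt (real a) \<ge> 0" using assms(1) by simp
  then show ?thesis using assms(2,3) unfolding h_fun_def Let_def by auto
qed

definition high_blocks :: "nat \<Rightarrow> nat \<Rightarrow> real \<Rightarrow> real \<Rightarrow> nat \<Rightarrow> bool list set \<Rightarrow>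
    nat set \<Rightarrow> (nat \<Rightarrow> nat set) \<Rightarrow> nat set" where
  "high_blocks n a \<epsilon> c1 L Q A T = {l \<in> {..<L}. \<exists>x\<in>Q. S_T L T x = {l} \<and>
     real (n - a) / 2 \<le> real (wt ({..<n} - A) x) \<and>
     real (wt ({..<n} - A) x) \<le> real (n - a) / 2 + 0.05 * \<epsilon> * sqrt (real (n - a)) \<and>
     real (wt A x) > real a / 2 + c1 * sqrt (real a)}"

lemma hard_f_single_block:
  assumes "S_T L T x = {l}"
    and "real (n - a) / 2 \<le> real (wt ({..<n} - A) x)"
    and "real (wt ({..<n} - A) x) \<le> real (n - a) / 2 + 0.05 * \<epsilon> * sqrt (real (n - a))"
  shows "hard_f yes n a \<epsilon> c1 L A T b x = h_fun yes (b l) c1 a A x"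
  using assms unfolding hard_f_def Let_def by auto

lemma hard_f_outside_single_block:
  assumes "\<not> (\<exists>l. S_T L T x = {l} \<and> real (n - a) / 2 \<le> real (wt ({..<n} - A) x) \<and>
      real (wt ({..<n} - A) x) \<le> real (n - a) / 2 + 0.05 * \<epsilon> * sqrt (real (n - a)))"
  shows "hard_f yes n a \<epsilon> c1 L A T b x = hard_f yes' n a \<epsilon> c1 L A T b' x"
  using assms unfolding hard_f_def Let_def by (auto simp: card_1_singleton_iff not_less le_Suc_eq)

lemma hard_f_yes_eq_no_flipped:
  assumes "c1 \<ge> 0" and "\<not> Bad n a \<epsilon> c1 L A T Q" and "x \<in> Q"
  shows "hard_f True n a \<epsilon> c1 L A T b x
       = hard_f False n a \<epsilon> c1 L A T (flip_on (high_blocks n a \<epsilon> c1 L Q A T) b) x"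
proof (cases "\<exists>l. S_T L T x = {l} \<and> real (n - a) / 2 \<le> real (wt ({..<n} - A) x) \<and>
    real (wt ({..<n} - A) x) \<le> real (n - a) / 2 + 0.05 * \<epsilon> * sqrt (real (n - a))")
  case True
  then obtain l where block: "S_T L T x = {l}"
    and mid: "real (n - a) / 2 \<le> real (wt ({..<n} - A) x)"
      "real (wt ({..<n} - A) x) \<le> real (n - a) / 2 + 0.05 * \<epsilon> * sqrt (real (n - a))"
    by blast
  have "l < L" using block by (auto simp: S_T_def)
  have high: "l \<in> high_blocks n a \<epsilon> c1 L Q A T"
    if "real (wt A x) > real a / 2 + c1 * sqrt (real a)"
    using that \<open>l < L\<close> \<open>x \<in> Q\<close> block mid unfolding high_blocks_def by blast
  have not_high: "l \<notin> high_blocks n a \<epsilon> c1 L Q A T"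
    if "real (wt A x) < real a / 2 - c1 * sqrt (real a)"
    using that \<open>l < L\<close> \<open>x \<in> Q\<close> block mid assms(2)
    unfolding high_blocks_def Bad_def Let_def by blast
  show ?thesis
    unfolding hard_f_single_block[OF block mid]
    by (rule h_fun_plus_eq_minus[OF assms(1)]) (auto simp: flip_on_def dest: high not_high)
next
  case False
  then show ?thesis by (rule hard_f_outside_single_block)
qed

theorem mainTheorem9:
  fixes n a t L :: nat and \<epsilon> c1 :: real and Q :: "bool list set"
  assumes "\<epsilon> > 0" and "c1 > 0"
    and "real a = sqrt (real n) / \<epsilon>" and "a < n"
    and "real t = sqrt (real (n - a)) / \<epsilon>"
    and "L = nat \<lfloor>0.1 * (2::real) ^ t\<rfloor>"
    and "finite Q" and "\<forall>x\<in>Q. length x = n"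
    and "measure_pmf.prob (ATb_pmf n a t L) (notBad_event n a \<epsilon> c1 L Q) > 0"
  shows "answer_dist True n a \<epsilon> c1 t L Q = answer_dist False n a \<epsilon> c1 t L Q"
  unfolding answer_dist_def
proof (rule map_cond_pmf_eq_by_symmetry)
  show "map_pmf (\<lambda>(A, T, b). (A, T, flip_on (high_blocks n a \<epsilon> c1 L Q A T) b)) (ATb_pmf n a t L)
      = ATb_pmf n a t L"
    by (rule map_pmf_flip_on_ATb_pmf) (auto simp: high_blocks_def)
  show "set_pmf (ATb_pmf n a t L) \<inter> notBad_event n a \<epsilon> c1 L Q \<noteq> {}"
    using assms(9) by (auto simp: measure_pmf_zero_iff[symmetric])
next
  fix w assume "w \<in> notBad_event n a \<epsilon> c1 L Q"
  then obtain A T b where "w = (A, T, b)" and "\<not> Bad n a \<epsilon> c1 L A T Q"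
    by (auto simp: notBad_event_def)
  with assms(2) show "(\<lambda>(A, T, b) x. if x \<in> Q then hard_f False n a \<epsilon> c1 L A T b x else False)
        ((\<lambda>(A, T, b). (A, T, flip_on (high_blocks n a \<epsilon> c1 L Q A T) b)) w)
      = (\<lambda>(A, T, b) x. if x \<in> Q then hard_f True n a \<epsilon> c1 L A T b x else False) w"
    by (auto simp: hard_f_yes_eq_no_flipped)
qed (auto simp: notBad_event_def)

end
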